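(* Let $t,c,k\in\mathbb{N}$, let $G$ be a strongly $t$-boundaried graph, and let $H$ and $H'$ be $t$-boundaried graphs that are $c$-equivalent. Then $G\oplus H$ has a vertex cover of size at most $k$ if and only if $G\oplus H'$ has a vertex cover of size at most $k-c$.
   Context: Graphs are finite, simple, undirected. A graph $G$ is $t$-boundaried if $t$ of its non-isolated vertices $x_1,\dots,x_t$ (the boundary) are bijectively labeled with $1,\dots,t$; it is strongly $t$-boundaried if moreover $\{x_1,\dots,x_t\}$ is an independent set in $G$. For a strongly $t$-boundaried $G$ and a $t$-boundaried $H$, $G\oplus H$ (gluing) is obtained from the disjoint union of $G$ and $H$ by identifying the boundary vertices with the same label. A vertex set $S$ of $G\oplus H$ is compatible with $X\subseteq\{1,\dots,t\}$ in $G$ if for all $i$: $N_G(x_i)\subseteq S \iff i\in X$, where $N_G$ is the neighborhood in $G$. The profile $P^G_H:2^{\{1,\dots,t\}}\to\mathbb{N}\cup\{\infty\}$ assigns to $X$ the minimum of $|S\cap V(H)|$ over all vertex covers $S$ of $G\oplus H$ compatible with $X$ in $G$ ($\infty$ if none exists). Two $t$-boundaried graphs $H,H'$ are $c$-equivalent if $P^{G}_H(X)=P^{G}_{H'}(X)+c$ for every strongly $t$-boundaried graph $G$ and every $X\subseteq\{1,\dots,t\}$ (with $\infty+c=\infty$). *)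

theory Defs
  imports Main "HOL-Library.Extended_Nat"
begin

text \<open>A t-boundaried graph additionally carries a labelling bnd of the boundary:
  bnd i is the boundary vertex with label i, for i in {1..t}.\<close>

record 'a bgraph =
  verts :: "'a set"
  edges :: "'a set set"
  bnd   :: "nat \<Rightarrow> 'a"

definition simple_graph :: "'a set \<Rightarrow> 'a set set \<Rightarrow> bool" where
  "simple_graph V E \<longleftrightarrow> finite V \<and>
     (\<forall>e\<in>E. \<exists>u v. e = {u, v} \<and> u \<noteq> v \<and> u \<in> V \<and> v \<in> V)"

definition vertex_cover :: "'a set \<Rightarrow> 'a set set \<Rightarrow> 'a set \<Rightarrow> bool" where
  "vertex_cover V E S \<longleftrightarrow> S \<subseteq> V \<and> (\<forall>e\<in>E. e \<inter> S \<noteq> {})"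

definition nbhd :: "'a set set \<Rightarrow> 'a \<Rightarrow> 'a set" where
  "nbhd E x = {y. {x, y} \<in> E}"

definition t_boundaried :: "nat \<Rightarrow> 'a bgraph \<Rightarrow> bool" where
  "t_boundaried t G \<longleftrightarrow> simple_graph (verts G) (edges G) \<and>
     inj_on (bnd G) {1..t} \<and>
     (\<forall>i\<in>{1..t}. bnd G i \<in> verts G \<and> (\<exists>e\<in>edges G. bnd G i \<in> e))"

definition strongly_t_boundaried :: "nat \<Rightarrow> 'a bgraph \<Rightarrow> bool" where
  "strongly_t_boundaried t G \<longleftrightarrow> t_boundaried t G \<and>
     (\<forall>i\<in>{1..t}. \<forall>j\<in>{1..t}. {bnd G i, bnd G j} \<notin> edges G)"

text \<open>Gluing: the vertices of G are embedded via Inl, the non-boundary vertices of H via Inr,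
  and the boundary vertex of H with label i is identified with Inl (bnd G i).\<close>

definition glue_emb :: "nat \<Rightarrow> 'a bgraph \<Rightarrow> 'b bgraph \<Rightarrow> 'b \<Rightarrow> 'a + 'b" where
  "glue_emb t G H v =
     (if \<exists>i\<in>{1..t}. bnd H i = v
      then Inl (bnd G (THE i. i \<in> {1..t} \<and> bnd H i = v))
      else Inr v)"

definition glue_verts :: "nat \<Rightarrow> 'a bgraph \<Rightarrow> 'b bgraph \<Rightarrow> ('a + 'b) set" where
  "glue_verts t G H = Inl ` verts G \<union> glue_emb t G H ` verts H"

definition glue_edges :: "nat \<Rightarrow> 'a bgraph \<Rightarrow> 'b bgraph \<Rightarrow> ('a + 'b) set set" where
  "glue_edges t G H = (\<lambda>e. Inl ` e) ` edges G \<union> (\<lambda>e. glue_emb t G H ` e) ` edges H"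

definition compatible :: "nat \<Rightarrow> 'a bgraph \<Rightarrow> ('a + 'b) set \<Rightarrow> nat set \<Rightarrow> bool" where
  "compatible t G S X \<longleftrightarrow>
     (\<forall>i\<in>{1..t}. (Inl ` nbhd (edges G) (bnd G i) \<subseteq> S \<longleftrightarrow> i \<in> X))"

text \<open>The profile P^G_H(X); the infimum of the empty set in enat is \<infinity>.\<close>

definition profile :: "nat \<Rightarrow> 'a bgraph \<Rightarrow> 'b bgraph \<Rightarrow> nat set \<Rightarrow> enat" where
  "profile t G H X = Inf {enat (card (S \<inter> glue_emb t G H ` verts H)) | S.
      vertex_cover (glue_verts t G H) (glue_edges t G H) S \<and> compatible t G S X}"

text \<open>c-equivalence, where the strongly t-boundaried graphs G range over graphs whose
  vertices are drawn from the type 'g.\<close>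

definition c_equivalent :: "'g itself \<Rightarrow> nat \<Rightarrow> nat \<Rightarrow> 'b bgraph \<Rightarrow> 'c bgraph \<Rightarrow> bool" where
  "c_equivalent _ t c H H' \<longleftrightarrow>
     (\<forall>(G :: 'g bgraph) X. strongly_t_boundaried t G \<longrightarrow> X \<subseteq> {1..t} \<longrightarrow>
        profile t G H X = profile t G H' X + enat c)"

end

theory Submission
  imports Defs
begin

text \<open>Let S be a vertex cover of G \<oplus> H and X the set of labels i with N_G(x_i) \<subseteq> S, so that
  S is compatible with X and P^G_H(X) \<le> |S \<inter> V(H)|. Take a cover S' of G \<oplus> H' compatible with X
  and of size P^G_{H'}(X) on V(H'). Keeping the part of S outside V(H) and the part of S' inside
  V(H') gives a cover of G \<oplus> H': the only G-edges not covered by the first part join some x_i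
  in S to a non-boundary neighbour outside S (the boundary of G is independent), so i \<notin> X, and
  then compatibility forces x_i \<in> S'. Since P^G_H(X) = P^G_{H'}(X) + c, this trades c vertices in
  both directions.\<close>

definition saturated_labels :: "nat \<Rightarrow> 'a bgraph \<Rightarrow> ('a + 'b) set \<Rightarrow> nat set" where
  "saturated_labels t G S = {i \<in> {1..t}. Inl ` nbhd (edges G) (bnd G i) \<subseteq> S}"

lemma compatible_saturated_labels: "compatible t G S (saturated_labels t G S)"
  by (auto simp: compatible_def saturated_labels_def)

lemma saturated_labels_subset: "saturated_labels t G S \<subseteq> {1..t}"
  by (auto simp: saturated_labels_def)

lemma glue_emb_bnd:
  assumes "t_boundaried t H" "i \<in> {1..t}"
  shows "glue_emb t G H (bnd H i) = Inl (bnd G i)"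
proof -
  have "inj_on (bnd H) {1..t}" using assms(1) unfolding t_boundaried_def by blast
  then have "(THE j. j \<in> {1..t} \<and> bnd H j = bnd H i) = i"
    using assms(2) by (intro the_equality) (auto dest: inj_onD)
  then show ?thesis using assms(2) unfolding glue_emb_def by auto
qed

lemma Inl_in_glue_emb_image_iff:
  assumes "t_boundaried t H"
  shows "Inl w \<in> glue_emb t G H ` verts H \<longleftrightarrow> w \<in> bnd G ` {1..t}"
proof
  assume "Inl w \<in> glue_emb t G H ` verts H"
  then obtain v where "v \<in> verts H" "glue_emb t G H v = Inl w" by auto
  moreover from this obtain i where "i \<in> {1..t}" "bnd H i = v"
    unfolding glue_emb_def by (auto split: if_splits)
  ultimately show "w \<in> bnd G ` {1..t}" using glue_emb_bnd[OF assms, of i G] by auto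
next
  assume "w \<in> bnd G ` {1..t}"
  then obtain i where i: "i \<in> {1..t}" "w = bnd G i" by auto
  then have "bnd H i \<in> verts H" using assms unfolding t_boundaried_def by blast
  then show "Inl w \<in> glue_emb t G H ` verts H" using glue_emb_bnd[OF assms i(1), of G] i
    by (metis image_eqI)
qed

lemma finite_glue_verts:
  assumes "t_boundaried t G" "t_boundaried t H"
  shows "finite (glue_verts t G H)"
  using assms unfolding t_boundaried_def simple_graph_def glue_verts_def by auto

lemma simple_graph_edge_other_end:
  assumes "simple_graph V E" "e \<in> E" "w \<in> e"
  obtains z where "e = {w, z}" "w \<noteq> z" "w \<in> V" "z \<in> V"
proof -
  obtain u v where "e = {u, v}" "u \<noteq> v" "u \<in> V" "v \<in> V"
    using assms(1,2) unfolding simple_graph_def by blast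
  with assms(3) that show ?thesis by (auto simp: insert_commute)
qed

lemma strongly_t_boundaried_bnd_nbr_notin_bnd:
  assumes "strongly_t_boundaried t G" "{w, z} \<in> edges G" "w \<in> bnd G ` {1..t}"
  shows "z \<notin> bnd G ` {1..t}"
  using assms unfolding strongly_t_boundaried_def by auto

lemma Inl_in_vertex_cover_if_nbhd_not_covered:
  assumes "vertex_cover (glue_verts t G H) (glue_edges t G H) S"
    and "\<not> Inl ` nbhd (edges G) x \<subseteq> S"
  shows "Inl x \<in> S"
proof -
  obtain y where y: "{x, y} \<in> edges G" "Inl y \<notin> S" using assms(2) unfolding nbhd_def by auto
  then have "Inl ` {x, y} \<in> glue_edges t G H" unfolding glue_edges_def by blast
  with assms(1) y(2) show ?thesis unfolding vertex_cover_def by fastforce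
qed

lemma profile_saturated_labels_le:
  assumes "vertex_cover (glue_verts t G H) (glue_edges t G H) S"
  shows "profile t G H (saturated_labels t G S) \<le> enat (card (S \<inter> glue_emb t G H ` verts H))"
  unfolding profile_def
  by (rule Inf_lower) (use assms compatible_saturated_labels in blast)

lemma profile_attained:
  assumes "profile t G H X = enat p"
  obtains S where "vertex_cover (glue_verts t G H) (glue_edges t G H) S"
    and "compatible t G S X" and "card (S \<inter> glue_emb t G H ` verts H) = p"
proof -
  let ?M = "{enat (card (S \<inter> glue_emb t G H ` verts H)) | S.
      vertex_cover (glue_verts t G H) (glue_edges t G H) S \<and> compatible t G S X}"
  have prof: "profile t G H X = Inf ?M" unfolding profile_def ..
  have "?M \<noteq> {}"
  proof
    assume "?M = {}"
    with prof assms show False by (simp add: top_enat_def)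
  qed
  then have "Inf ?M \<in> ?M" unfolding Inf_enat_def by (auto intro: LeastI)
  then show ?thesis using assms that prof by auto
qed

definition exchange_cover ::
    "nat \<Rightarrow> 'a bgraph \<Rightarrow> 'c bgraph \<Rightarrow> ('a + 'b) set \<Rightarrow> ('a + 'c) set \<Rightarrow> ('a + 'c) set" where
  "exchange_cover t G H' S S' =
     Inl ` {w \<in> verts G. Inl w \<in> S \<and> w \<notin> bnd G ` {1..t}} \<union> (S' \<inter> glue_emb t G H' ` verts H')"

lemma vertex_cover_exchange_cover:
  assumes sG: "strongly_t_boundaried t G" and tH': "t_boundaried t H'"
    and S: "vertex_cover (glue_verts t G H) (glue_edges t G H) S"
    and S': "vertex_cover (glue_verts t G H') (glue_edges t G H') S'"
    and compat: "compatible t G S' (saturated_labels t G S)"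
  shows "vertex_cover (glue_verts t G H') (glue_edges t G H') (exchange_cover t G H' S S')"
    (is "vertex_cover _ _ ?T")
proof -
  have tG: "t_boundaried t G" using sG unfolding strongly_t_boundaried_def by blast
  have sgG: "simple_graph (verts G) (edges G)" and sgH': "simple_graph (verts H') (edges H')"
    using tG tH' unfolding t_boundaried_def by blast+
  have sub: "?T \<subseteq> glue_verts t G H'"
    unfolding exchange_cover_def glue_verts_def by auto
  have "e \<inter> ?T \<noteq> {}" if e: "e \<in> glue_edges t G H'" for e
  proof -
    consider e0 where "e0 \<in> edges H'" "e = glue_emb t G H' ` e0"
      | e0 where "e0 \<in> edges G" "e = Inl ` e0"
      using e unfolding glue_edges_def by blast
    then show ?thesis
    proof cases
      case (1 e0)
      have "e0 \<subseteq> verts H'" using sgH' 1(1) unfolding simple_graph_def by fastforce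
      then have "e \<subseteq> glue_emb t G H' ` verts H'" using 1(2) by blast
      moreover have "e \<inter> S' \<noteq> {}" using S' e unfolding vertex_cover_def by blast
      ultimately show ?thesis unfolding exchange_cover_def by blast
    next
      case (2 e0)
      have "Inl ` e0 \<in> glue_edges t G H" using 2(1) unfolding glue_edges_def by blast
      then obtain w where w: "w \<in> e0" "Inl w \<in> S" using S unfolding vertex_cover_def by blast
      obtain z where z: "e0 = {w, z}" and wG: "w \<in> verts G"
        using simple_graph_edge_other_end[OF sgG 2(1) w(1)] by metis
      show ?thesis
      proof (cases "w \<in> bnd G ` {1..t} \<and> Inl z \<notin> S")
        case True
        then obtain i where i: "i \<in> {1..t}" "w = bnd G i" by blast
        have "z \<in> nbhd (edges G) w" using 2(1) z unfolding nbhd_def by simp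
        then have "i \<notin> saturated_labels t G S"
          using i True unfolding saturated_labels_def by auto
        then have "\<not> Inl ` nbhd (edges G) w \<subseteq> S'"
          using compat i unfolding compatible_def by blast
        then have "Inl w \<in> S'" by (rule Inl_in_vertex_cover_if_nbhd_not_covered[OF S'])
        moreover have "Inl w \<in> glue_emb t G H' ` verts H'"
          using Inl_in_glue_emb_image_iff[OF tH', of w G] True by blast
        ultimately show ?thesis using 2(2) w(1) unfolding exchange_cover_def by blast
      next
        case False
        then consider "w \<notin> bnd G ` {1..t}" | "Inl z \<in> S" "z \<notin> bnd G ` {1..t}"
          using strongly_t_boundaried_bnd_nbr_notin_bnd[OF sG] 2(1) z by blast
        then show ?thesis
        proof cases
          case 1
          then have "Inl w \<in> ?T" using w wG unfolding exchange_cover_def by blast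
          then show ?thesis using 2(2) w(1) by blast
        next
          case 2
          moreover have "z \<in> verts G"
            using simple_graph_edge_other_end[OF sgG \<open>e0 \<in> edges G\<close>, of z] z by auto
          ultimately have "Inl z \<in> ?T" unfolding exchange_cover_def by blast
          then show ?thesis using \<open>e = Inl ` e0\<close> z by blast
        qed
      qed
    qed
  qed
  with sub show ?thesis unfolding vertex_cover_def by blast
qed

lemma card_exchange_cover_le:
  assumes "t_boundaried t G" "t_boundaried t H" "t_boundaried t H'"
    and S: "vertex_cover (glue_verts t G H) (glue_edges t G H) S"
  shows "card (exchange_cover t G H' S S') + card (S \<inter> glue_emb t G H ` verts H)
         \<le> card S + card (S' \<inter> glue_emb t G H' ` verts H')"
proof -
  let ?A = "glue_emb t G H ` verts H"
  let ?SG = "{w \<in> verts G. Inl w \<in> S \<and> w \<notin> bnd G ` {1..t}}"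
  have finS: "finite S"
    using S finite_glue_verts[OF assms(1,2)] unfolding vertex_cover_def by (blast intro: finite_subset)
  have "(Inl ` ?SG :: ('a + 'b) set) \<subseteq> S - ?A"
  proof
    fix x assume "x \<in> (Inl ` ?SG :: ('a + 'b) set)"
    then obtain w where "x = Inl w" "Inl w \<in> S" "w \<notin> bnd G ` {1..t}" by blast
    then show "x \<in> S - ?A" using Inl_in_glue_emb_image_iff[OF assms(2), of w G] by simp
  qed
  then have "card (Inl ` ?SG :: ('a + 'b) set) \<le> card (S - ?A)"
    using finS by (intro card_mono) auto
  then have "card ?SG \<le> card (S - ?A)" by (simp add: card_image)
  moreover have "card (exchange_cover t G H' S S')
      \<le> card ?SG + card (S' \<inter> glue_emb t G H' ` verts H')"
    unfolding exchange_cover_def by (rule order_trans[OF card_Un_le]) (simp add: card_image)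
  moreover have "card S = card (S - ?A) + card (S \<inter> ?A)"
    using card_Int_Diff[OF finS, of ?A] by linarith
  ultimately show ?thesis by linarith
qed

lemma exists_cover_exchanging_part:
  assumes sG: "strongly_t_boundaried t G" and tH: "t_boundaried t H" and tH': "t_boundaried t H'"
    and S: "vertex_cover (glue_verts t G H) (glue_edges t G H) S"
    and p: "profile t G H' (saturated_labels t G S) = enat p"
  obtains T where "vertex_cover (glue_verts t G H') (glue_edges t G H') T"
    and "card T + card (S \<inter> glue_emb t G H ` verts H) \<le> card S + p"
proof -
  have tG: "t_boundaried t G" using sG unfolding strongly_t_boundaried_def by blast
  obtain S' where "vertex_cover (glue_verts t G H') (glue_edges t G H') S'"
    "compatible t G S' (saturated_labels t G S)" "card (S' \<inter> glue_emb t G H' ` verts H') = p"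
    using profile_attained[OF p] .
  then show ?thesis
    using that[of "exchange_cover t G H' S S'"] vertex_cover_exchange_cover[OF sG tH' S]
      card_exchange_cover_le[OF tG tH tH' S, of S'] by simp
qed

theorem lemma3:
  fixes t c k :: nat
    and G :: "'a bgraph" and H :: "'b bgraph" and H' :: "'c bgraph"
  assumes "strongly_t_boundaried t G"
    and "t_boundaried t H"
    and "t_boundaried t H'"
    and "c_equivalent TYPE('a) t c H H'"
  shows "(\<exists>S. vertex_cover (glue_verts t G H) (glue_edges t G H) S \<and> card S \<le> k) \<longleftrightarrow>
         (\<exists>S. vertex_cover (glue_verts t G H') (glue_edges t G H') S \<and>
              int (card S) \<le> int k - int c)"
proof -
  have "profile t G H X = profile t G H' X + enat c" if "X \<subseteq> {1..t}" for X
    using assms(1,4) that unfolding c_equivalent_def by blast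
  note equiv = this[OF saturated_labels_subset[of t G]]
  show ?thesis
  proof (intro iffI; elim exE conjE)
    fix S assume S: "vertex_cover (glue_verts t G H) (glue_edges t G H) S" "card S \<le> k"
    obtain p where p: "profile t G H' (saturated_labels t G S) = enat p"
      "p + c \<le> card (S \<inter> glue_emb t G H ` verts H)"
      using profile_saturated_labels_le[OF S(1)] equiv[of S]
      by (cases "profile t G H' (saturated_labels t G S)") auto
    obtain T where "vertex_cover (glue_verts t G H') (glue_edges t G H') T"
      "card T + card (S \<inter> glue_emb t G H ` verts H) \<le> card S + p"
      using exists_cover_exchanging_part[OF assms(1-3) S(1) p(1)] .
    with p(2) S(2) show "\<exists>T. vertex_cover (glue_verts t G H') (glue_edges t G H') T \<and>
        int (card T) \<le> int k - int c"
      by (intro exI[of _ T]) auto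
  next
    fix S assume S: "vertex_cover (glue_verts t G H') (glue_edges t G H') S"
      "int (card S) \<le> int k - int c"
    obtain p where p: "profile t G H (saturated_labels t G S) = enat (p + c)"
      "p \<le> card (S \<inter> glue_emb t G H' ` verts H')"
      using profile_saturated_labels_le[OF S(1)] equiv[of S]
      by (cases "profile t G H' (saturated_labels t G S)") auto
    obtain T where "vertex_cover (glue_verts t G H) (glue_edges t G H) T"
      "card T + card (S \<inter> glue_emb t G H' ` verts H') \<le> card S + (p + c)"
      using exists_cover_exchanging_part[OF assms(1,3,2) S(1) p(1)] .
    with p(2) S(2) show "\<exists>T. vertex_cover (glue_verts t G H) (glue_edges t G H) T \<and> card T \<le> k"
      by (intro exI[of _ T]) auto
  qed
qed

end
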